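(* Let $A$ be a $\{0,1\}$-matrix and let $\mathcal{C}\subset B_*(X_A)$ be a right Markov code for $(X_A,\sigma_A)$. Suppose that $X_A$ has a fixed point $a^\infty=(a,a,a,\dots)\in X_A$ for some $a\in\Sigma_A$. Then for $m\ge1$, the word $a^m=a a\cdots a$ ($m$ letters) belongs to $\mathcal{C}$ if and only if $m=1$.
   Context: For an $N\times N$ matrix $A$ with entries in $\{0,1\}$, $\Sigma_A=\{1,\dots,N\}$, $X_A$ is the set of sequences $(x_n)_{n\in\mathbb{N}}$ in $\Sigma_A$ with $A(x_n,x_{n+1})=1$ for all $n$, with shift $\sigma_A((x_n)_n)=(x_{n+1})_n$. $B_k(X_A)$ is the set of admissible words of length $k$, $B_*(X_A)$ the union over $k\ge0$ (including the empty word). For a word $w=w_1\cdots w_\ell$, $\sigma_A(w)=w_2\cdots w_\ell$. A code is a nonempty $\mathcal{C}\subset B_*(X_A)$ such that any equality of concatenations $\omega(i_1)\cdots\omega(i_k)=\omega(j_1)\cdots\omega(j_n)$ of words of $\mathcal{C}$ forces $n=k$ and $\omega(i_m)=\omega(j_m)$ for all $m$; a prefix code is a code in which no word is a prefix of another. A finite prefix code $\mathcal{C}=\{\omega(1),\dots,\omega(M)\}\subset B_*(X_A)$, $\Sigma_{A(\mathcal{C})}=\{1,\dots,M\}$, is a right Markov code for $(X_A,\sigma_A)$ if: (i) for every $\gamma\in B_*(X_A)$ there is $\eta\in B_*(X_A)$ with $\gamma\eta\in B_*(X_A)$ and a unique finite sequence $(i_1,\dots,i_k)$ in $\Sigma_{A(\mathcal{C})}$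 with $\gamma\eta=\omega(i_1)\cdots\omega(i_k)$; (ii) there is $L\in\mathbb{N}$ such that for all $i_1,\dots,i_L$ with $\omega(i_1)\cdots\omega(i_L)\in B_*(X_A)$ there exist $j_1,\dots,j_k\in\Sigma_{A(\mathcal{C})}$ with $\sigma_A(\omega(i_1))\omega(i_2)\cdots\omega(i_L)=\omega(j_1)\cdots\omega(j_k)$; (iii) for every $i,j$ there are $n_1,\dots,n_l$ with $\omega(i)\omega(n_1)\cdots\omega(n_l)\omega(j)\in B_*(X_A)$. *)

theory Defs
  imports Main "HOL-Library.Sublist"
begin

text \<open>A {0,1}-matrix of size N x N is modelled as a function A :: nat => nat => nat,
  indexed by the alphabet Sigma_A = {1..N}. Words are lists over nat.\<close>

definition Sigma_A :: "nat \<Rightarrow> nat set" where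
  "Sigma_A N = {1..N}"

definition zero_one_matrix :: "nat \<Rightarrow> (nat \<Rightarrow> nat \<Rightarrow> nat) \<Rightarrow> bool" where
  "zero_one_matrix N A \<longleftrightarrow> (\<forall>i\<in>Sigma_A N. \<forall>j\<in>Sigma_A N. A i j \<in> {0, 1})"

definition X_A :: "nat \<Rightarrow> (nat \<Rightarrow> nat \<Rightarrow> nat) \<Rightarrow> (nat \<Rightarrow> nat) set" where
  "X_A N A = {x. (\<forall>n. x n \<in> Sigma_A N) \<and> (\<forall>n. A (x n) (x (Suc n)) = 1)}"

definition B_k :: "nat \<Rightarrow> (nat \<Rightarrow> nat \<Rightarrow> nat) \<Rightarrow> nat \<Rightarrow> nat list set" where
  "B_k N A k = {w. \<exists>x\<in>X_A N A. \<exists>i. w = map x [i..<i+k]}"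

definition B_star :: "nat \<Rightarrow> (nat \<Rightarrow> nat \<Rightarrow> nat) \<Rightarrow> nat list set" where
  "B_star N A = (\<Union>k. B_k N A k)"

definition sigma_word :: "nat list \<Rightarrow> nat list" where
  "sigma_word w = tl w"

definition is_code :: "nat \<Rightarrow> (nat \<Rightarrow> nat \<Rightarrow> nat) \<Rightarrow> nat list set \<Rightarrow> bool" where
  "is_code N A C \<longleftrightarrow> C \<noteq> {} \<and> C \<subseteq> B_star N A \<and>
     (\<forall>us vs. us \<noteq> [] \<longrightarrow> vs \<noteq> [] \<longrightarrow> set us \<subseteq> C \<longrightarrow> set vs \<subseteq> C \<longrightarrow>
        concat us = concat vs \<longrightarrow> us = vs)"

definition is_prefix_code :: "nat \<Rightarrow> (nat \<Rightarrow> nat \<Rightarrow> nat) \<Rightarrow> nat list set \<Rightarrow> bool" where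
  "is_prefix_code N A C \<longleftrightarrow> is_code N A C \<and>
     (\<forall>u\<in>C. \<forall>v\<in>C. prefix u v \<longrightarrow> u = v)"

definition right_markov_code :: "nat \<Rightarrow> (nat \<Rightarrow> nat \<Rightarrow> nat) \<Rightarrow> nat list set \<Rightarrow> bool" where
  "right_markov_code N A C \<longleftrightarrow> finite C \<and> is_prefix_code N A C \<and>
     \<comment> \<open>(i)\<close>
     (\<forall>\<gamma>\<in>B_star N A. \<exists>\<eta>\<in>B_star N A. \<gamma> @ \<eta> \<in> B_star N A \<and>
        (\<exists>!us. set us \<subseteq> C \<and> \<gamma> @ \<eta> = concat us)) \<and>
     \<comment> \<open>(ii)\<close>
     (\<exists>L::nat. L \<ge> 1 \<and> (\<forall>us. length us = L \<longrightarrow> set us \<subseteq> C \<longrightarrow> concat us \<in> B_star N A \<longrightarrow>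
        (\<exists>vs. set vs \<subseteq> C \<and> sigma_word (hd us) @ concat (tl us) = concat vs))) \<and>
     \<comment> \<open>(iii)\<close>
     (\<forall>u\<in>C. \<forall>v\<in>C. \<exists>ws. set ws \<subseteq> C \<and> u @ concat ws @ v \<in> B_star N A)"

end

(* If a^m is a code word, condition (ii) applied to (a^m)^L writes a^(Lm-1) as a product of
   code words; by prefix-freeness a^m is the only code word consisting of a's, so m divides
   Lm - 1 and m = 1. Some power of a is a code word: by condition (i) the admissible word a^K,
   K the maximal length of a code word, extends to a product of code words, and the first
   factor is a nonempty power of a. *)

theory Submission
  imports Defs
begin

lemma replicate_in_B_star:
  assumes "(\<lambda>_. a) \<in> X_A N A"
  shows "replicate k a \<in> B_star N A"
proof -
  have "replicate k a = map (\<lambda>_. a) [0..<0 + k]"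
    by (simp add: map_replicate_const)
  then show ?thesis
    using assms unfolding B_star_def B_k_def by blast
qed

lemma code_Nil_notin:
  assumes "is_code N A C"
  shows "[] \<notin> C"
proof
  assume "[] \<in> C"
  with assms have "[[]] = [[], []]"
    unfolding is_code_def by (elim conjE allE[of _ "[[]]"] allE[of _ "[[], []]"]) simp
  then show False by simp
qed

lemma concat_replicate_replicate: "concat (replicate L (replicate m a)) = replicate (L * m) a"
  by (induction L) (simp_all add: replicate_add)

lemma prefix_replicate_cases:
  "prefix (replicate j a) (replicate k a) \<or> prefix (replicate k a) (replicate j a)"
  by (metis nat_le_linear le_add_diff_inverse prefixI replicate_add)

lemma prefix_free_factors_of_replicate:
  assumes prefix_free: "\<forall>u\<in>C. \<forall>v\<in>C. prefix u v \<longrightarrow> u = v"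
    and "replicate m a \<in> C" and "set vs \<subseteq> C" and "concat vs = replicate n a"
  shows "set vs \<subseteq> {replicate m a}"
proof
  fix w assume w: "w \<in> set vs"
  have "set w \<subseteq> {a}"
  proof -
    have "set w \<subseteq> set (concat vs)" using w by auto
    also have "\<dots> \<subseteq> {a}" using assms(4) by (simp add: set_replicate_conv_if)
    finally show ?thesis .
  qed
  then have "replicate (length w) a = w"
    by (intro replicate_length_same) auto
  then have "prefix w (replicate m a) \<or> prefix (replicate m a) w"
    by (metis prefix_replicate_cases)
  then show "w \<in> {replicate m a}"
    using prefix_free w assms(2,3) by blast
qed

lemma right_markov_code_has_prefix_in_code:
  assumes code: "right_markov_code N A C"
    and "\<gamma> \<in> B_star N A" and long: "Max (length ` C) \<le> length \<gamma>"
  shows "\<exists>w\<in>C. w \<noteq> [] \<and> prefix w \<gamma>"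
proof -
  have "finite C" and "is_code N A C"
    using code unfolding right_markov_code_def is_prefix_code_def by simp_all
  have "C \<noteq> {}"
    using \<open>is_code N A C\<close> by (simp add: is_code_def)
  have "[] \<notin> C"
    using \<open>is_code N A C\<close> by (rule code_Nil_notin)
  with \<open>C \<noteq> {}\<close> obtain w0 where "w0 \<in> C" "w0 \<noteq> []" by blast
  have max_length: "length w \<le> length \<gamma>" if "w \<in> C" for w
    using that \<open>finite C\<close> long by (meson Max_ge finite_imageI imageI le_trans)
  with \<open>w0 \<in> C\<close> \<open>w0 \<noteq> []\<close> have "\<gamma> \<noteq> []" by fastforce
  have "\<forall>\<gamma>\<in>B_star N A. \<exists>\<eta>\<in>B_star N A. \<gamma> @ \<eta> \<in> B_star N A \<and>
      (\<exists>!us. set us \<subseteq> C \<and> \<gamma> @ \<eta> = concat us)"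
    using code unfolding right_markov_code_def by (elim conjE)
  then obtain \<eta> us where "set us \<subseteq> C" and factor: "\<gamma> @ \<eta> = concat us"
    using \<open>\<gamma> \<in> B_star N A\<close> by (metis ex1_implies_ex)
  with \<open>\<gamma> \<noteq> []\<close> obtain w ws where "us = w # ws" by (cases us) auto
  with \<open>set us \<subseteq> C\<close> factor have "w \<in> C" and "w @ concat ws = \<gamma> @ \<eta>" by auto
  then have "take (length w) (\<gamma> @ \<eta>) = w"
    by (metis append_eq_conv_conj)
  with max_length[OF \<open>w \<in> C\<close>] have "take (length w) \<gamma> = w" by simp
  then have "prefix w \<gamma>"
    by (metis take_is_prefix)
  moreover have "w \<noteq> []"
    using \<open>w \<in> C\<close> \<open>[] \<notin> C\<close> by auto
  ultimately show ?thesis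
    using \<open>w \<in> C\<close> by (intro bexI[of _ w] conjI)
qed

lemma right_markov_code_replicate_mem_imp_eq_1:
  assumes code: "right_markov_code N A C" and fixed: "(\<lambda>_. a) \<in> X_A N A"
    and "replicate m a \<in> C" and "m \<ge> 1"
  shows "m = 1"
proof -
  have prefix_free: "\<forall>u\<in>C. \<forall>v\<in>C. prefix u v \<longrightarrow> u = v"
    using code unfolding right_markov_code_def is_prefix_code_def by (elim conjE)
  have "\<exists>L::nat. L \<ge> 1 \<and> (\<forall>us. length us = L \<longrightarrow> set us \<subseteq> C \<longrightarrow>
      concat us \<in> B_star N A \<longrightarrow>
      (\<exists>vs. set vs \<subseteq> C \<and> sigma_word (hd us) @ concat (tl us) = concat vs))"
    using code unfolding right_markov_code_def by (elim conjE)
  then obtain L where "L \<ge> 1" and shift: "\<And>us. length us = L \<Longrightarrow> set us \<subseteq> C \<Longrightarrow>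
      concat us \<in> B_star N A \<Longrightarrow>
      \<exists>vs. set vs \<subseteq> C \<and> sigma_word (hd us) @ concat (tl us) = concat vs"
    by blast
  let ?us = "replicate L (replicate m a)"
  have "set ?us \<subseteq> C" using \<open>replicate m a \<in> C\<close> by (simp add: set_replicate_conv_if)
  moreover have "concat ?us \<in> B_star N A"
    by (simp add: concat_replicate_replicate replicate_in_B_star[OF fixed])
  ultimately obtain vs where "set vs \<subseteq> C"
    and vs: "sigma_word (hd ?us) @ concat (tl ?us) = concat vs"
    using shift[of ?us] by auto
  have "sigma_word (hd ?us) @ concat (tl ?us) = replicate (m - 1) a @ replicate ((L - 1) * m) a"
    using \<open>L \<ge> 1\<close> by (cases L) (simp_all add: sigma_word_def concat_replicate_replicate)
  also have "\<dots> = replicate (L * m - 1) a"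
    using \<open>L \<ge> 1\<close> \<open>m \<ge> 1\<close> by (simp add: diff_mult_distrib flip: replicate_add)
  finally have "concat vs = replicate (L * m - 1) a" using vs by simp
  moreover have "vs = replicate (length vs) (replicate m a)"
    using prefix_free_factors_of_replicate[OF prefix_free \<open>replicate m a \<in> C\<close> \<open>set vs \<subseteq> C\<close>]
      calculation by (intro replicate_eqI) auto
  ultimately have "replicate (length vs * m) a = replicate (L * m - 1) a"
    by (metis concat_replicate_replicate)
  then have "L * m - 1 = length vs * m"
    by (metis length_replicate)
  then have "m dvd L * m - 1" by simp
  then have "m dvd L * m - (L * m - 1)" by simp
  moreover have "L * m - (L * m - 1) = 1" using \<open>L \<ge> 1\<close> \<open>m \<ge> 1\<close> by simp
  ultimately show ?thesis by simp
qed

theorem mainTheorem5: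
  fixes N :: nat and A :: "nat \<Rightarrow> nat \<Rightarrow> nat" and C :: "nat list set" and a :: nat
  assumes "zero_one_matrix N A"
    and "right_markov_code N A C"
    and "a \<in> Sigma_A N"
    and "(\<lambda>_. a) \<in> X_A N A"
  shows "\<forall>m::nat. m \<ge> 1 \<longrightarrow> (replicate m a \<in> C \<longleftrightarrow> m = 1)"
proof -
  obtain w where "w \<in> C" "w \<noteq> []" and "prefix w (replicate (Max (length ` C)) a)"
    using right_markov_code_has_prefix_in_code[OF assms(2) replicate_in_B_star[OF assms(4)]] by auto
  moreover have "set w \<subseteq> {a}"
    using set_mono_prefix[OF \<open>prefix w _\<close>] by (simp add: set_replicate_conv_if split: if_splits)
  then have "replicate (length w) a = w"
    by (intro replicate_length_same) auto
  ultimately have "replicate (length w) a \<in> C" and "length w \<ge> 1"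
    by (simp_all add: Suc_le_eq)
  then have "replicate 1 a \<in> C"
    using right_markov_code_replicate_mem_imp_eq_1[OF assms(2,4)] by metis
  then show ?thesis
    using right_markov_code_replicate_mem_imp_eq_1[OF assms(2,4)] by blast
qed

end
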